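(* Let $k$ be a positive integer and, for each $n\ge1$, let $\overline{w}_{n,k}$ denote the number of words $w_1\cdots w_n$ with all $w_i\in[n]$ that contain no weakly increasing subsequence of length $k+1$ (i.e. there are no indices $i_1<\dots<i_{k+1}$ with $w_{i_1}\le w_{i_2}\le\dots\le w_{i_{k+1}}$); equivalently, whose standardization avoids the permutation $12\cdots(k+1)$. Then the limit $\lim_{n\to\infty}\overline{w}_{n,k}^{1/n}$ exists and \[\limsup_{n\to\infty}\overline{w}_{n,k}^{1/n}=\frac{k^{k+1}}{(k-1)^{k-1}},\] with the convention $0^0=1$.
   Context: $[n]=\{1,\dots,n\}$. The standardization $\mathrm{std}(w)$ of a word $w=w_1\cdots w_n$ of positive integers is the permutation of $[n]$ obtained by replacing the letters of $w$ by $1,\dots,n$ preserving relative order, where equal letters are numbered increasingly from left to right. A permutation $\pi$ avoids $\sigma\in\mathfrak S_m$ if no subsequence of $\pi$ of length $m$ is order-isomorphic to $\sigma$. *)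

theory Defs
  imports "HOL-Analysis.Analysis"
begin

text \<open>A word of length n over [n] is a function w with w i in {1..n} for i < n,
  and w i = undefined outside (extensional), so words correspond bijectively to such functions.\<close>
definition words :: "nat \<Rightarrow> (nat \<Rightarrow> nat) set" where
  "words n = {0..<n} \<rightarrow>\<^sub>E {1..n}"

definition has_weakly_inc_subseq :: "nat \<Rightarrow> nat \<Rightarrow> (nat \<Rightarrow> nat) \<Rightarrow> bool" where
  "has_weakly_inc_subseq n m w \<longleftrightarrow>
     (\<exists>idx :: nat \<Rightarrow> nat. (\<forall>j<m. idx j < n) \<and> (\<forall>j. Suc j < m \<longrightarrow> idx j < idx (Suc j))
        \<and> (\<forall>j. Suc j < m \<longrightarrow> w (idx j) \<le> w (idx (Suc j))))"

definition wbar :: "nat \<Rightarrow> nat \<Rightarrow> nat" where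
  "wbar n k = card {w \<in> words n. \<not> has_weakly_inc_subseq n (k + 1) w}"

end

theory Submission
  imports Defs "HOL-Combinatorics.Multiset_Permutations"
begin

text \<open>
  A word avoids weakly increasing subsequences of length \<open>k + 1\<close> iff its positions can be
  coloured with \<open>k\<close> colours so that every colour class is strictly decreasing (colour a
  position by the length of the longest weak chain ending there). A strictly decreasing class is
  determined by its set of values, so each of the \<open>k ^ n\<close> colourings carries at most
  \<open>\<Prod>j. n choose |class j|\<close> words, and \<open>n choose c \<le> (1 + x) ^ n / x ^ c\<close> bounds
  \<open>wbar n k\<close> by \<open>L ^ n\<close> with \<open>L = k ^ (k + 1) / (k - 1) ^ (k - 1)\<close>.

  Conversely, concatenate \<open>T\<close> independent blocks of length \<open>k b\<close>: in each block every colour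
  occurs \<open>b\<close> times and takes, in decreasing order, the values of a \<open>b\<close>-set inside a band
  of values that moves down by one band from block to block. This yields
  \<open>(multinomial \<cdot> (k b - 1 choose b) ^ k) ^ T\<close> distinct avoiding words of length \<open>T k b\<close>;
  by Stirling-type estimates the block count is at least \<open>L ^ (k b)\<close> divided by a polynomial
  in \<open>b\<close>, and \<open>wbar\<close> is monotone in \<open>n\<close>.
\<close>

section \<open>Weak chains and decreasing colourings\<close>

definition weak_chain :: "(nat \<Rightarrow> nat) \<Rightarrow> nat list \<Rightarrow> bool" where
  "weak_chain w xs \<longleftrightarrow> sorted_wrt (<) xs \<and> sorted_wrt (\<lambda>i j. w i \<le> w j) xs"

lemma has_weakly_inc_subseq_iff_weak_chain:
  "has_weakly_inc_subseq n m w \<longleftrightarrow>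
     (\<exists>xs. weak_chain w xs \<and> length xs = m \<and> set xs \<subseteq> {..<n})"
proof
  assume "has_weakly_inc_subseq n m w"
  then obtain idx where "\<forall>j<m. idx j < n" "\<forall>j. Suc j < m \<longrightarrow> idx j < idx (Suc j)"
    "\<forall>j. Suc j < m \<longrightarrow> w (idx j) \<le> w (idx (Suc j))"
    unfolding has_weakly_inc_subseq_def by blast
  then show "\<exists>xs. weak_chain w xs \<and> length xs = m \<and> set xs \<subseteq> {..<n}"
    by (intro exI[of _ "map idx [0..<m]"])
      (auto simp: weak_chain_def sorted_wrt_iff_nth_Suc_transp transp_on_def)
next
  assume "\<exists>xs. weak_chain w xs \<and> length xs = m \<and> set xs \<subseteq> {..<n}"
  then obtain xs where xs: "weak_chain w xs" "length xs = m" "set xs \<subseteq> {..<n}" by blast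
  then have "\<forall>j<m. xs ! j < n" by (auto dest: nth_mem)
  with xs show "has_weakly_inc_subseq n m w"
    unfolding has_weakly_inc_subseq_def
    by (intro exI[of _ "(!) xs"])
      (auto simp: weak_chain_def sorted_wrt_iff_nth_Suc_transp transp_on_def)
qed

lemma weak_chain_snoc:
  "weak_chain w (xs @ [i]) \<longleftrightarrow> weak_chain w xs \<and> (\<forall>x\<in>set xs. x < i \<and> w x \<le> w i)"
  by (auto simp: weak_chain_def sorted_wrt_append)

lemma weak_chain_last:
  assumes "weak_chain w xs" "x \<in> set xs"
  shows "x \<le> last xs \<and> w x \<le> w (last xs)"
  using assms by (cases xs rule: rev_cases) (auto simp: weak_chain_snoc)

definition chain_height :: "(nat \<Rightarrow> nat) \<Rightarrow> nat \<Rightarrow> nat" where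
  "chain_height w i = Max (length ` {xs. weak_chain w xs \<and> xs \<noteq> [] \<and> last xs = i})"

lemma chain_height:
  fixes w :: "nat \<Rightarrow> nat" and i :: nat
  defines "C \<equiv> {xs. weak_chain w xs \<and> xs \<noteq> [] \<and> last xs = i}"
  shows chain_height_ge: "xs \<in> C \<Longrightarrow> length xs \<le> chain_height w i"
    and chain_height_witness: "\<exists>xs\<in>C. length xs = chain_height w i"
proof -
  have "length xs \<le> Suc i" if "xs \<in> C" for xs
  proof -
    have "set xs \<subseteq> {..i}" using weak_chain_last[of w xs] that by (auto simp: C_def)
    moreover have "distinct xs"
      using that by (auto simp: C_def weak_chain_def strict_sorted_iff)
    ultimately show ?thesis by (metis card_atMost card_mono distinct_card finite_atMost)
  qed
  then have fin: "finite (length ` C)" by (meson finite_atMost finite_subset image_subsetI atMost_iff)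
  show "xs \<in> C \<Longrightarrow> length xs \<le> chain_height w i"
    unfolding chain_height_def C_def[symmetric] using fin by simp
  have "[i] \<in> C" by (simp add: C_def weak_chain_def)
  then have "length ` C \<noteq> {}" by blast
  then show "\<exists>xs\<in>C. length xs = chain_height w i"
    unfolding chain_height_def C_def[symmetric] using Max_in[OF fin] by fastforce
qed

lemma chain_height_pos: "0 < chain_height w i"
  using chain_height_witness[of w i] by (metis (mono_tags) length_greater_0_conv mem_Collect_eq)

lemma chain_height_strict_mono:
  assumes "i < i'" "w i \<le> w i'"
  shows "chain_height w i < chain_height w i'"
proof -
  obtain xs where xs: "weak_chain w xs" "xs \<noteq> []" "last xs = i" "length xs = chain_height w i"
    using chain_height_witness[of w i] by blast
  have "x < i' \<and> w x \<le> w i'" if "x \<in> set xs" for x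
    using weak_chain_last[OF xs(1) that] xs(3) assms by auto
  then have "weak_chain w (xs @ [i'])" using xs(1) by (simp add: weak_chain_snoc)
  then have "length (xs @ [i']) \<le> chain_height w i'" by (intro chain_height_ge) auto
  then show ?thesis using xs(4) by simp
qed

definition colour_class :: "nat \<Rightarrow> (nat \<Rightarrow> nat) \<Rightarrow> nat \<Rightarrow> nat set" where
  "colour_class n c j = {i. i < n \<and> c i = j}"

definition decreasing_colouring :: "nat \<Rightarrow> nat \<Rightarrow> (nat \<Rightarrow> nat) \<Rightarrow> (nat \<Rightarrow> nat) \<Rightarrow> bool" where
  "decreasing_colouring n k w c \<longleftrightarrow>
     (\<forall>i<n. c i < k) \<and> (\<forall>j. strict_antimono_on (colour_class n c j) w)"

lemma decreasing_colouringD: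
  "decreasing_colouring n k w c \<Longrightarrow> i < i' \<Longrightarrow> i' < n \<Longrightarrow> c i = c i' \<Longrightarrow> w i' < w i"
  by (auto simp: decreasing_colouring_def colour_class_def monotone_on_def)

lemma decreasing_colouringI:
  "(\<And>i. i < n \<Longrightarrow> c i < k) \<Longrightarrow>
   (\<And>i i'. i < i' \<Longrightarrow> i' < n \<Longrightarrow> c i = c i' \<Longrightarrow> w i' < w i) \<Longrightarrow>
   decreasing_colouring n k w c"
  by (auto simp: decreasing_colouring_def colour_class_def monotone_on_def)

lemma chain_height_decreasing_colouring:
  assumes "\<not> has_weakly_inc_subseq n (k + 1) w"
  shows "decreasing_colouring n k w (\<lambda>i. chain_height w i - 1)"
proof (rule decreasing_colouringI)
  fix i assume "i < n"
  show "chain_height w i - 1 < k"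
  proof (rule ccontr)
    assume "\<not> chain_height w i - 1 < k"
    moreover obtain xs where xs: "weak_chain w xs" "xs \<noteq> []" "last xs = i" "length xs = chain_height w i"
      using chain_height_witness[of w i] by blast
    ultimately have "length (take (k + 1) xs) = k + 1"
      using chain_height_pos[of w i] by (simp add: min_def, linarith)
    moreover have "weak_chain w (take (k + 1) xs)"
      using xs(1) by (simp add: weak_chain_def)
    moreover have "set (take (k + 1) xs) \<subseteq> {..<n}"
      using weak_chain_last[OF xs(1)] xs(3) \<open>i < n\<close> set_take_subset by fastforce
    ultimately show False using assms by (auto simp: has_weakly_inc_subseq_iff_weak_chain)
  qed
next
  fix i i' assume "i < i'" "chain_height w i - 1 = chain_height w i' - 1"
  show "w i' < w i"
  proof (rule ccontr)
    assume "\<not> w i' < w i"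
    then have "chain_height w i < chain_height w i'"
      using \<open>i < i'\<close> by (intro chain_height_strict_mono) auto
    then show False using \<open>chain_height w i - 1 = chain_height w i' - 1\<close> chain_height_pos[of w i]
      by linarith
  qed
qed

lemma not_has_weakly_inc_subseq_if_decreasing_colouring:
  assumes c: "decreasing_colouring n k w c"
  shows "\<not> has_weakly_inc_subseq n (k + 1) w"
proof
  assume "has_weakly_inc_subseq n (k + 1) w"
  then obtain xs where xs: "weak_chain w xs" "length xs = k + 1" "set xs \<subseteq> {..<n}"
    by (auto simp: has_weakly_inc_subseq_iff_weak_chain)
  have in_range: "xs ! a < n" if "a < k + 1" for a
    using xs(2,3) that by (metis in_mono lessThan_iff nth_mem)
  have distinct_colours: "c (xs ! a) \<noteq> c (xs ! a')" if "a < a'" "a' < k + 1" for a a'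
  proof
    assume "c (xs ! a) = c (xs ! a')"
    moreover have "xs ! a < xs ! a'" "w (xs ! a) \<le> w (xs ! a')"
      using xs(1,2) that sorted_wrt_nth_less[of _ xs a a'] by (auto simp: weak_chain_def)
    ultimately show False using decreasing_colouringD[OF c] in_range that by fastforce
  qed
  have "inj_on (\<lambda>a. c (xs ! a)) {..<k + 1}"
  proof (rule inj_onI)
    fix a a' assume "a \<in> {..<k + 1}" "a' \<in> {..<k + 1}" "c (xs ! a) = c (xs ! a')"
    then show "a = a'" using distinct_colours[of a a'] distinct_colours[of a' a]
      by (cases a a' rule: linorder_cases) auto
  qed
  moreover have "(\<lambda>a. c (xs ! a)) ` {..<k + 1} \<subseteq> {..<k}"
    using c in_range by (auto simp: decreasing_colouring_def)
  ultimately show False using card_inj_on_le[of _ "{..<k + 1}" "{..<k}"] by simp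
qed

text \<open>This is Mirsky's theorem (the dual of Dilworth's theorem).\<close>

lemma not_has_weakly_inc_subseq_iff_decreasing_colouring:
  "\<not> has_weakly_inc_subseq n (k + 1) w \<longleftrightarrow> (\<exists>c. decreasing_colouring n k w c)"
  using chain_height_decreasing_colouring not_has_weakly_inc_subseq_if_decreasing_colouring by blast

definition avoiders :: "nat \<Rightarrow> nat \<Rightarrow> (nat \<Rightarrow> nat) set" where
  "avoiders n k = {w \<in> words n. \<not> has_weakly_inc_subseq n (k + 1) w}"

lemma wbar_eq_card_avoiders: "wbar n k = card (avoiders n k)"
  by (simp add: wbar_def avoiders_def)

lemma finite_avoiders: "finite (avoiders n k)"
  by (simp add: avoiders_def words_def finite_PiE)

lemma mem_avoiders_iff: "w \<in> avoiders n k \<longleftrightarrow> w \<in> words n \<and> (\<exists>c. decreasing_colouring n k w c)"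
  using not_has_weakly_inc_subseq_iff_decreasing_colouring[of n k w] by (simp add: avoiders_def)

section \<open>The upper bound\<close>

lemma strict_antimono_on_determined_by_image:
  fixes f g :: "'a::linorder \<Rightarrow> 'b::linorder"
  assumes "finite C" "strict_antimono_on C f" "strict_antimono_on C g" "f ` C = g ` C" "x \<in> C"
  shows "f x = g x"
proof -
  have sorted_image: "sorted_list_of_set (h ` C) = rev (map h (sorted_list_of_set C))"
    if h: "strict_antimono_on C h" for h :: "'a \<Rightarrow> 'b"
  proof -
    have "sorted_wrt (\<lambda>a b. h b < h a) (sorted_list_of_set C)"
      using h assms(1) sorted_wrt_mono_rel[OF _ strict_sorted_list_of_set[of C], of "\<lambda>a b. h b < h a"]
      unfolding monotone_on_def by simp
    then have "sorted_wrt (<) (rev (map h (sorted_list_of_set C)))"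
      by (simp add: sorted_wrt_rev sorted_wrt_map)
    moreover have "card (h ` C) = card C"
      using h by (simp add: strict_antimono_iff_antimono card_image)
    ultimately show ?thesis
      using assms(1) sorted_list_of_set_unique[of "h ` C" "rev (map h (sorted_list_of_set C))"]
      by simp
  qed
  have "map f (sorted_list_of_set C) = map g (sorted_list_of_set C)"
    using sorted_image[OF assms(2)] sorted_image[OF assms(3)] assms(4) by simp
  then show ?thesis using assms(1,5) by simp
qed

lemma inj_on_colour_class_images:
  "inj_on (\<lambda>w. \<lambda>j\<in>{..<k}. w ` colour_class n c j) {w \<in> words n. decreasing_colouring n k w c}"
proof (rule inj_onI, rule ext)
  fix w w' i
  assume w: "w \<in> {w \<in> words n. decreasing_colouring n k w c}"
    and w': "w' \<in> {w \<in> words n. decreasing_colouring n k w c}"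
    and eq: "(\<lambda>j\<in>{..<k}. w ` colour_class n c j) = (\<lambda>j\<in>{..<k}. w' ` colour_class n c j)"
  show "w i = w' i"
  proof (cases "i < n")
    case True
    then have "c i < k" and mem: "i \<in> colour_class n c (c i)"
      using w by (auto simp: decreasing_colouring_def colour_class_def)
    then have img: "w ` colour_class n c (c i) = w' ` colour_class n c (c i)"
      using fun_cong[OF eq, of "c i"] by simp
    have fin: "finite (colour_class n c (c i))" by (simp add: colour_class_def)
    have "strict_antimono_on (colour_class n c (c i)) w" "strict_antimono_on (colour_class n c (c i)) w'"
      using w w' by (simp_all add: decreasing_colouring_def)
    from strict_antimono_on_determined_by_image[OF fin this img mem] show ?thesis .
  next
    case False
    moreover have "w \<in> {0..<n} \<rightarrow>\<^sub>E {1..n}" "w' \<in> {0..<n} \<rightarrow>\<^sub>E {1..n}"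
      using w w' by (simp_all add: words_def)
    ultimately show ?thesis by (metis PiE_arb atLeastLessThan_iff)
  qed
qed

lemma card_words_with_decreasing_colouring_le:
  "card {w \<in> words n. decreasing_colouring n k w c} \<le> (\<Prod>j<k. n choose card (colour_class n c j))"
proof -
  let ?S = "\<Pi>\<^sub>E j\<in>{..<k}. {B. B \<subseteq> {1..n} \<and> card B = card (colour_class n c j)}"
  have "(\<lambda>j\<in>{..<k}. w ` colour_class n c j) \<in> ?S"
    if w: "w \<in> words n" "decreasing_colouring n k w c" for w
  proof -
    have "w ` colour_class n c j \<subseteq> {1..n}" for j
      using w(1) by (auto simp: words_def colour_class_def)
    moreover have "card (w ` colour_class n c j) = card (colour_class n c j)" for j
      using w(2) by (simp add: decreasing_colouring_def strict_antimono_iff_antimono card_image)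
    ultimately show ?thesis by simp
  qed
  then have "(\<lambda>w. \<lambda>j\<in>{..<k}. w ` colour_class n c j) ` {w \<in> words n. decreasing_colouring n k w c} \<subseteq> ?S"
    by blast
  moreover have "finite ?S" by (intro finite_PiE) auto
  ultimately have "card {w \<in> words n. decreasing_colouring n k w c} \<le> card ?S"
    by (intro card_inj_on_le[OF inj_on_colour_class_images])
  also have "card ?S = (\<Prod>j<k. n choose card (colour_class n c j))"
    by (simp add: card_PiE n_subsets)
  finally show ?thesis .
qed

lemma wbar_le_sum_colourings:
  "wbar n k \<le> (\<Sum>c\<in>{..<n} \<rightarrow>\<^sub>E {..<k}. \<Prod>j<k. n choose card (colour_class n c j))"
proof -
  let ?W = "\<lambda>c. {w \<in> words n. decreasing_colouring n k w c}"
  have "avoiders n k \<subseteq> (\<Union>c\<in>{..<n} \<rightarrow>\<^sub>E {..<k}. ?W c)"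
  proof
    fix w assume "w \<in> avoiders n k"
    then obtain c where "w \<in> words n" "decreasing_colouring n k w c"
      by (auto simp: mem_avoiders_iff)
    moreover have "colour_class n (restrict c {..<n}) = colour_class n c"
      by (auto simp: colour_class_def)
    ultimately have "restrict c {..<n} \<in> {..<n} \<rightarrow>\<^sub>E {..<k}" "w \<in> ?W (restrict c {..<n})"
      by (auto simp: decreasing_colouring_def)
    then show "w \<in> (\<Union>c\<in>{..<n} \<rightarrow>\<^sub>E {..<k}. ?W c)" by blast
  qed
  then have "wbar n k \<le> card (\<Union>c\<in>{..<n} \<rightarrow>\<^sub>E {..<k}. ?W c)"
    unfolding wbar_eq_card_avoiders by (intro card_mono) (auto simp: words_def finite_PiE)
  also have "\<dots> \<le> (\<Sum>c\<in>{..<n} \<rightarrow>\<^sub>E {..<k}. card (?W c))"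
    by (intro card_UN_le) (simp add: finite_PiE)
  also have "\<dots> \<le> (\<Sum>c\<in>{..<n} \<rightarrow>\<^sub>E {..<k}. \<Prod>j<k. n choose card (colour_class n c j))"
    by (intro sum_mono card_words_with_decreasing_colouring_le)
  finally show ?thesis .
qed

lemma binomial_mult_power_le:
  fixes x :: real
  assumes "0 \<le> x"
  shows "real (n choose m) * x ^ m \<le> (1 + x) ^ n"
proof (cases "m \<le> n")
  case True
  have "real (n choose m) * x ^ m \<le> (\<Sum>i\<le>n. real (n choose i) * x ^ i)"
    using True assms by (intro member_le_sum) auto
  also have "\<dots> = (1 + x) ^ n"
    using binomial_ring[of x 1 n] by (simp add: add.commute)
  finally show ?thesis .
next
  case False
  then show ?thesis using assms by (simp add: binomial_eq_0)
qed

lemma sum_card_colour_class: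
  assumes "c \<in> {..<n} \<rightarrow> {..<k}"
  shows "(\<Sum>j<k. card (colour_class n c j)) = n"
  using sum.group[of "{..<n}" "{..<k}" c "\<lambda>_. 1::nat"] assms
  by (auto simp: colour_class_def)

lemma sum_colourings_prod_binomial_le:
  fixes x :: real
  assumes "0 < x"
  shows "(\<Sum>c\<in>{..<n} \<rightarrow>\<^sub>E {..<k}. \<Prod>j<k. real (n choose card (colour_class n c j)))
           \<le> (real k * (1 + x) ^ k / x) ^ n"
proof -
  have prod_le: "(\<Prod>j<k. real (n choose card (colour_class n c j))) \<le> ((1 + x) ^ k) ^ n / x ^ n"
    if c: "c \<in> {..<n} \<rightarrow>\<^sub>E {..<k}" for c
  proof -
    have "(\<Prod>j<k. real (n choose card (colour_class n c j)))
          \<le> (\<Prod>j<k. (1 + x) ^ n / x ^ card (colour_class n c j))"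
      using binomial_mult_power_le assms
      by (intro prod_mono) (auto simp: pos_le_divide_eq)
    also have "\<dots> = ((1 + x) ^ n) ^ k / x ^ (\<Sum>j<k. card (colour_class n c j))"
      by (simp add: prod_dividef power_sum)
    also have "\<dots> = ((1 + x) ^ k) ^ n / x ^ n"
      using c by (simp add: sum_card_colour_class PiE_iff power_mult[symmetric] mult.commute)
    finally show ?thesis .
  qed
  have "(\<Sum>c\<in>{..<n} \<rightarrow>\<^sub>E {..<k}. \<Prod>j<k. real (n choose card (colour_class n c j)))
        \<le> (\<Sum>c\<in>{..<n} \<rightarrow>\<^sub>E {..<k}. ((1 + x) ^ k) ^ n / x ^ n)"
    by (intro sum_mono prod_le)
  also have "\<dots> = (real k * (1 + x) ^ k / x) ^ n"
    by (simp add: card_PiE power_divide power_mult_distrib)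
  finally show ?thesis .
qed

definition growth_rate :: "nat \<Rightarrow> real" where
  "growth_rate k = real k ^ (k + 1) / real (k - 1) ^ (k - 1)"

lemma wbar_le_growth_rate_power:
  assumes "1 \<le> k"
  shows "real (wbar n k) \<le> growth_rate k ^ n"
proof -
  have "real (wbar n k) \<le> real (\<Sum>c\<in>{..<n} \<rightarrow>\<^sub>E {..<k}. \<Prod>j<k. n choose card (colour_class n c j))"
    by (simp only: of_nat_le_iff wbar_le_sum_colourings)
  also have "\<dots> = (\<Sum>c\<in>{..<n} \<rightarrow>\<^sub>E {..<k}. \<Prod>j<k. real (n choose card (colour_class n c j)))"
    by simp
  also have "\<dots> \<le> growth_rate k ^ n"
  proof (cases "k = 1")
    case True
    then have "colour_class n c 0 = {..<n}" if "c \<in> {..<n} \<rightarrow>\<^sub>E {..<k}" for c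
      using that by (auto simp: colour_class_def)
    then show ?thesis using True by (simp add: card_PiE growth_rate_def)
  next
    case False
    with assms have "2 \<le> k" by simp
    then obtain m where k: "k = Suc (Suc m)" by (auto dest: le_Suc_ex)
    define x where "x = 1 / real (k - 1)" \<comment> \<open>the minimiser of \<open>k (1 + x) ^ k / x\<close>\<close>
    have "1 + x = real k / real (k - 1)" using k by (simp add: x_def field_simps)
    then have "real k * (1 + x) ^ k / x = real k * real k ^ k / real (k - 1) ^ k * real (k - 1)"
      by (simp add: x_def power_divide)
    also have "\<dots> = growth_rate k"
      using k by (simp add: growth_rate_def)
    finally show ?thesis
      using sum_colourings_prod_binomial_le[of x n k] k by (simp add: x_def)
  qed
  finally show ?thesis .
qed

section \<open>Factorial estimates\<close>

lemma power_le_fact_exp: "real m ^ m \<le> fact m * exp (real m)"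
proof -
  have exp_series: "(\<lambda>i. real m ^ i /\<^sub>R fact i) sums exp (real m)" by (rule exp_converges)
  have "(\<Sum>i\<in>{m}. real m ^ i /\<^sub>R fact i) \<le> (\<Sum>i. real m ^ i /\<^sub>R fact i)"
    by (rule sum_le_suminf[OF sums_summable[OF exp_series]]) auto
  then have "real m ^ m / fact m \<le> exp (real m)"
    using sums_unique[OF exp_series] by (simp add: divide_inverse_commute)
  then show ?thesis by (simp add: divide_le_eq mult.commute)
qed

lemma exp_one_mult_power_le: "exp 1 * real m ^ Suc m \<le> real (Suc m) ^ Suc m"
proof -
  have "real m / real (Suc m) = 1 + (- 1 / real (Suc m))" by (simp add: field_simps)
  also have "\<dots> \<le> exp (- 1 / real (Suc m))" by (rule exp_ge_add_one_self)
  finally have "(real m / real (Suc m)) ^ Suc m \<le> exp (- 1 / real (Suc m)) ^ Suc m"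
    by (intro power_mono) auto
  also have "\<dots> = exp (real (Suc m) * (- 1 / real (Suc m)))" by (rule exp_of_nat_mult[symmetric])
  also have "\<dots> = exp (- 1)" by simp
  finally have "real m ^ Suc m \<le> exp (- 1) * real (Suc m) ^ Suc m"
    by (simp add: power_divide divide_le_eq del: of_nat_Suc power_Suc)
  then show ?thesis by (simp add: exp_minus field_simps del: of_nat_Suc power_Suc)
qed

lemma fact_exp_le: "1 \<le> m \<Longrightarrow> fact m * exp (real m) \<le> exp 1 * real m ^ Suc m"
proof (induction m rule: dec_induct)
  case base
  then show ?case by simp
next
  case (step m)
  have "fact (Suc m) * exp (real (Suc m)) = real (Suc m) * exp 1 * (fact m * exp (real m))"
    by (simp add: exp_add algebra_simps)
  also have "\<dots> \<le> real (Suc m) * exp 1 * (exp 1 * real m ^ Suc m)"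
    by (intro mult_left_mono step.IH) auto
  also have "\<dots> \<le> real (Suc m) * exp 1 * real (Suc m) ^ Suc m"
    by (intro mult_left_mono exp_one_mult_power_le) auto
  also have "\<dots> = exp 1 * real (Suc m) ^ Suc (Suc m)" by simp
  finally show ?case .
qed

lemma multinomial_lower_bound:
  assumes "finite I" "\<And>i. i \<in> I \<Longrightarrow> 1 \<le> m i"
  defines "N \<equiv> \<Sum>i\<in>I. m i"
  shows "real N ^ N * (\<Prod>i\<in>I. fact (m i))
           \<le> fact N * (\<Prod>i\<in>I. exp 1 * real (m i) ^ Suc (m i))"
proof -
  have "real N ^ N * (\<Prod>i\<in>I. fact (m i)) \<le> fact N * exp (real N) * (\<Prod>i\<in>I. fact (m i))"
    by (intro mult_right_mono power_le_fact_exp) (simp add: prod_nonneg)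
  also have "\<dots> = fact N * (\<Prod>i\<in>I. fact (m i) * exp (real (m i)))"
    using assms(1) by (simp add: N_def exp_sum prod.distrib)
  also have "\<dots> \<le> fact N * (\<Prod>i\<in>I. exp 1 * real (m i) ^ Suc (m i))"
    using assms(2) fact_exp_le by (intro mult_left_mono prod_mono) (auto simp del: power_Suc)
  finally show ?thesis .
qed

lemma binomial_lower_bound:
  assumes "1 \<le> a" "1 \<le> c"
  shows "real (a + c) ^ (a + c) \<le> real ((a + c) choose a) * (exp 1 ^ 2 * real a ^ Suc a * real c ^ Suc c)"
proof -
  define f where "f i = (if i = 0 then a else c)" for i :: nat
  define F where "F = (fact a * fact c :: real)"
  define Y where "Y = exp 1 ^ 2 * real a ^ Suc a * real c ^ Suc c"
  have "(\<Sum>i\<in>{0, 1}. f i) = a + c" "(\<Prod>i\<in>{0, 1}. fact (f i)) = F"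
    "(\<Prod>i\<in>{0, 1}. exp 1 * real (f i) ^ Suc (f i)) = Y"
    by (simp_all add: f_def F_def Y_def power2_eq_square mult_ac del: power_Suc)
  then have "real (a + c) ^ (a + c) * F \<le> fact (a + c) * Y"
    using multinomial_lower_bound[of "{0, 1}" f] assms by (simp add: f_def del: power_Suc)
  also have "fact (a + c) = real ((a + c) choose a) * F"
    using binomial_fact_lemma[of a "a + c"] unfolding F_def by (metis add_diff_cancel_left' le_add1 mult.commute of_nat_fact of_nat_mult)
  finally have "real (a + c) ^ (a + c) * F \<le> real ((a + c) choose a) * Y * F"
    by (simp add: mult_ac)
  moreover have "0 < F" by (simp add: F_def)
  ultimately show ?thesis unfolding Y_def by simp
qed

section \<open>The block construction\<close>

definition nth_largest :: "'a::linorder set \<Rightarrow> nat \<Rightarrow> 'a" where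
  "nth_largest B r = rev (sorted_list_of_set B) ! r"

lemma nth_largest_mem: "finite B \<Longrightarrow> r < card B \<Longrightarrow> nth_largest B r \<in> B"
  unfolding nth_largest_def using nth_mem[of r "rev (sorted_list_of_set B)"] by simp

lemma nth_largest_strict_antimono:
  assumes "finite B" "r < r'" "r' < card B"
  shows "nth_largest B r' < nth_largest B r"
proof -
  have "sorted_list_of_set B ! (card B - Suc r') < sorted_list_of_set B ! (card B - Suc r)"
    using sorted_wrt_nth_less[OF strict_sorted_list_of_set[of B]] assms by simp
  then show ?thesis using assms by (simp add: nth_largest_def rev_nth)
qed

lemma nth_largest_image: "finite B \<Longrightarrow> nth_largest B ` {..<card B} = B"
  unfolding nth_largest_def
  by (metis atLeast0LessThan length_rev length_sorted_list_of_set list.set_map map_nth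
      set_rev set_sorted_list_of_set set_upt)

definition occ_rank :: "'a list \<Rightarrow> nat \<Rightarrow> nat" where
  "occ_rank xs u = count (mset (take u xs)) (xs ! u)"

lemma count_take_le:
  assumes "m \<le> m'"
  shows "count (mset (take m xs)) a \<le> count (mset (take m' xs)) a"
proof -
  have "take m' xs = take m xs @ take (m' - m) (drop m xs)"
    using take_add[of m "m' - m" xs] assms by simp
  then show ?thesis by (metis count_union le_add1 mset_append)
qed

lemma count_take_Suc:
  "u < length xs \<Longrightarrow> count (mset (take (Suc u) xs)) (xs ! u) = Suc (occ_rank xs u)"
  by (simp add: occ_rank_def take_Suc_conv_app_nth)

lemma occ_rank_less_count: "u < length xs \<Longrightarrow> occ_rank xs u < count (mset xs) (xs ! u)"
  using count_take_Suc[of u xs] count_take_le[of "Suc u" "length xs" xs "xs ! u"] by simp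

lemma occ_rank_strict_mono:
  assumes "u < u'" "u' < length xs" "xs ! u = xs ! u'"
  shows "occ_rank xs u < occ_rank xs u'"
  using count_take_Suc[of u xs] count_take_le[of "Suc u" u' xs "xs ! u"] assms
  by (simp add: occ_rank_def)

lemma occ_rank_surj:
  "r < count (mset xs) a \<Longrightarrow> \<exists>u<length xs. xs ! u = a \<and> occ_rank xs u = r"
proof (induction xs arbitrary: r)
  case Nil
  then show ?case by simp
next
  case (Cons y ys)
  show ?case
  proof (cases "y = a \<and> r = 0")
    case True
    then show ?thesis by (intro exI[of _ 0]) (simp add: occ_rank_def)
  next
    case False
    then have "r - (if y = a then 1 else 0) < count (mset ys) a" using Cons.prems by auto
    then obtain u where "u < length ys" "ys ! u = a" "occ_rank ys u = r - (if y = a then 1 else 0)"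
      using Cons.IH by blast
    then show ?thesis using False
      by (intro exI[of _ "Suc u"]) (auto simp: occ_rank_def)
  qed
qed

definition band :: "nat \<Rightarrow> nat \<Rightarrow> nat set" where
  "band c s = {s * c + 1 .. s * c + c}"

lemma band_less:
  assumes "v \<in> band c s" "v' \<in> band c s'" "s' < s"
  shows "v' < v"
proof -
  have "Suc s' * c \<le> s * c" using assms(3) by (intro mult_le_mono1) simp
  then show ?thesis using assms(1,2) by (auto simp: band_def)
qed

lemma band_unique: "v \<in> band c s \<Longrightarrow> v \<in> band c s' \<Longrightarrow> s = s'"
  by (metis band_less less_irrefl linorder_neqE_nat)

definition balanced_mset :: "nat \<Rightarrow> nat \<Rightarrow> nat multiset" where
  "balanced_mset k b = repeat_mset b (mset_set {..<k})"

lemma count_balanced_mset: "count (balanced_mset k b) j = (if j < k then b else 0)"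
  by (simp add: balanced_mset_def)

lemma size_balanced_mset: "size (balanced_mset k b) = k * b"
  by (simp add: balanced_mset_def)

lemma set_balanced_mset: "1 \<le> b \<Longrightarrow> set_mset (balanced_mset k b) = {..<k}"
  by (auto simp: set_mset_def count_balanced_mset split: if_splits)

lemma card_permutations_of_balanced_mset:
  assumes "1 \<le> b"
  shows "real (card (permutations_of_multiset (balanced_mset k b))) = fact (k * b) / fact b ^ k"
proof -
  have "(\<Prod>j\<in>set_mset (balanced_mset k b). fact (count (balanced_mset k b) j)) = (fact b ^ k :: nat)"
    using assms by (simp add: set_balanced_mset count_balanced_mset)
  then show ?thesis
    using card_permutations_of_multiset[of "balanced_mset k b"]
    by (simp add: size_balanced_mset real_of_nat_div)
qed

definition block_count :: "nat \<Rightarrow> nat \<Rightarrow> nat" where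
  "block_count k b = card (permutations_of_multiset (balanced_mset k b)) * ((k * b - 1) choose b) ^ k"

text \<open>
  Positions \<open>t * K + u\<close> (\<open>u < K = k b\<close>) form block \<open>t < T\<close>. The list \<open>\<sigma> t\<close> gives the
  colours of block \<open>t\<close>, each colour occurring \<open>b\<close> times; the letters of colour \<open>j\<close> in block
  \<open>t\<close> are the elements of \<open>A t j\<close>, largest first. Since \<open>A t j\<close> lies in band
  \<open>j + (T - 1 - t)\<close>, a colour class also decreases from block to block, and the band of a letter
  reveals its colour.
\<close>

locale block_construction =
  fixes k b T :: nat
  assumes two_le_k: "2 \<le> k" and one_le_b: "1 \<le> b"
begin

definition K :: nat where "K = k * b"

definition data :: "((nat \<Rightarrow> nat list) \<times> (nat \<Rightarrow> nat \<Rightarrow> nat set)) set" where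
  "data = ({..<T} \<rightarrow>\<^sub>E permutations_of_multiset (balanced_mset k b)) \<times>
     (\<Pi>\<^sub>E t\<in>{..<T}. \<Pi>\<^sub>E j\<in>{..<k}. {B. B \<subseteq> band (K - 1) (j + (T - Suc t)) \<and> card B = b})"

definition word :: "(nat \<Rightarrow> nat list) \<Rightarrow> (nat \<Rightarrow> nat \<Rightarrow> nat set) \<Rightarrow> nat \<Rightarrow> nat" where
  "word \<sigma> A = (\<lambda>p\<in>{..<T * K}.
     nth_largest (A (p div K) (\<sigma> (p div K) ! (p mod K))) (occ_rank (\<sigma> (p div K)) (p mod K)))"

definition colour :: "(nat \<Rightarrow> nat list) \<Rightarrow> nat \<Rightarrow> nat" where
  "colour \<sigma> p = \<sigma> (p div K) ! (p mod K)"

lemma K_pos: "0 < K"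
  using two_le_k one_le_b by (simp add: K_def)

lemma block_position:
  assumes "p < T * K"
  obtains t u where "t < T" "u < K" "p = t * K + u"
proof
  show "p div K < T" using assms by (simp add: less_mult_imp_div_less)
  show "p mod K < K" using K_pos by simp
  show "p = p div K * K + p mod K" by (rule div_mult_mod_eq[symmetric])
qed

lemma block_position_bounds:
  assumes "t < T" "u < K"
  shows "t * K + u < T * K" "(t * K + u) div K = t" "(t * K + u) mod K = u"
proof -
  have "t * K + u < Suc t * K" using assms by simp
  also have "\<dots> \<le> T * K" using assms by (intro mult_le_mono1) simp
  finally show "t * K + u < T * K" .
  show "(t * K + u) div K = t" "(t * K + u) mod K = u" using assms K_pos by simp_all
qed

lemma word_at:
  "t < T \<Longrightarrow> u < K \<Longrightarrow> word \<sigma> A (t * K + u) = nth_largest (A t (\<sigma> t ! u)) (occ_rank (\<sigma> t) u)"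
  by (simp add: word_def block_position_bounds)

lemma colour_at: "t < T \<Longrightarrow> u < K \<Longrightarrow> colour \<sigma> (t * K + u) = \<sigma> t ! u"
  by (simp add: colour_def block_position_bounds)

lemma data_colours:
  assumes "(\<sigma>, A) \<in> data" "t < T"
  shows "length (\<sigma> t) = K" "\<And>j. j < k \<Longrightarrow> count (mset (\<sigma> t)) j = b"
    "\<And>u. u < K \<Longrightarrow> \<sigma> t ! u < k"
proof -
  have mset: "mset (\<sigma> t) = balanced_mset k b"
    using assms by (auto simp: data_def permutations_of_multiset_def)
  then show "length (\<sigma> t) = K" by (metis K_def size_balanced_mset size_mset)
  show "\<And>j. j < k \<Longrightarrow> count (mset (\<sigma> t)) j = b" by (simp add: mset count_balanced_mset)
  show "\<sigma> t ! u < k" if "u < K" for u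
    using nth_mem[of u "\<sigma> t"] that set_balanced_mset[OF one_le_b, of k] mset \<open>length (\<sigma> t) = K\<close>
    by (metis lessThan_iff set_mset_mset)
qed

lemma data_value_sets:
  assumes "(\<sigma>, A) \<in> data" "t < T" "j < k"
  shows "A t j \<subseteq> band (K - 1) (j + (T - Suc t))" "card (A t j) = b" "finite (A t j)"
proof -
  have "A \<in> (\<Pi>\<^sub>E t\<in>{..<T}. \<Pi>\<^sub>E j\<in>{..<k}. {B. B \<subseteq> band (K - 1) (j + (T - Suc t)) \<and> card B = b})"
    using assms(1) by (simp add: data_def)
  from PiE_mem[OF PiE_mem[OF this], of t j] assms(2,3)
  show "A t j \<subseteq> band (K - 1) (j + (T - Suc t))" "card (A t j) = b"
    by simp_all
  then show "finite (A t j)" using one_le_b by (intro card_ge_0_finite) simp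
qed

lemma word_mem_value_set:
  assumes "(\<sigma>, A) \<in> data" "t < T" "u < K"
  shows "word \<sigma> A (t * K + u) \<in> A t (\<sigma> t ! u)"
proof -
  note col = data_colours[OF assms(1,2)]
  have "occ_rank (\<sigma> t) u < card (A t (\<sigma> t ! u))"
    using occ_rank_less_count[of u "\<sigma> t"] assms(3) col data_value_sets[OF assms(1,2)] by simp
  then show ?thesis
    using assms(2,3) data_value_sets[OF assms(1,2) col(3)[OF assms(3)]] by (simp add: word_at nth_largest_mem)
qed

lemma word_in_band:
  assumes "(\<sigma>, A) \<in> data" "t < T" "u < K"
  shows "word \<sigma> A (t * K + u) \<in> band (K - 1) (\<sigma> t ! u + (T - Suc t))"
  using word_mem_value_set[OF assms] data_value_sets[OF assms(1,2) data_colours(3)[OF assms]] by blast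

lemma word_in_words:
  assumes "(\<sigma>, A) \<in> data" and T_large: "(k - 1) * (K - 1) \<le> T"
  shows "word \<sigma> A \<in> words (T * K)"
proof -
  have "word \<sigma> A p \<in> {1..T * K}" if "p < T * K" for p
  proof -
    obtain t u where tu: "t < T" "u < K" "p = t * K + u" using block_position[OF \<open>p < T * K\<close>] .
    define s where "s = \<sigma> t ! u + (T - Suc t)"
    have "Suc s \<le> T + k - 1" using data_colours(3)[OF assms(1) tu(1,2)] tu(1) by (simp add: s_def)
    then have "Suc s * (K - 1) \<le> (T + (k - 1)) * (K - 1)" using two_le_k by (intro mult_le_mono1) simp
    also have "\<dots> \<le> T * (K - 1) + T" using T_large by (simp add: algebra_simps)
    also have "\<dots> = T * K" using K_pos by (simp add: algebra_simps)
    finally show ?thesis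
      using word_in_band[OF assms(1) tu(1,2)] tu(3) by (auto simp: band_def s_def)
  qed
  then show ?thesis by (auto simp: words_def word_def)
qed


lemma word_less_of_later_block:
  assumes "(\<sigma>, A) \<in> data" "t < t'" "t' < T" "u < K" "u' < K" "\<sigma> t ! u = \<sigma> t' ! u'"
  shows "word \<sigma> A (t' * K + u') < word \<sigma> A (t * K + u)"
proof -
  have "\<sigma> t' ! u' + (T - Suc t') < \<sigma> t ! u + (T - Suc t)" using assms(2,3,6) by simp
  with assms show ?thesis by (intro band_less[OF word_in_band word_in_band]) simp_all
qed

lemma word_less_within_block:
  assumes "(\<sigma>, A) \<in> data" "t < T" "u < u'" "u' < K" "\<sigma> t ! u = \<sigma> t ! u'"
  shows "word \<sigma> A (t * K + u') < word \<sigma> A (t * K + u)"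
proof -
  note col = data_colours[OF assms(1,2)]
  have j: "\<sigma> t ! u < k" using col(3) assms(3,4) by simp
  have "occ_rank (\<sigma> t) u < occ_rank (\<sigma> t) u'"
    using occ_rank_strict_mono[of u u' "\<sigma> t"] assms(3-5) col(1) by simp
  moreover have "occ_rank (\<sigma> t) u' < card (A t (\<sigma> t ! u))"
    using occ_rank_less_count[of u' "\<sigma> t"] assms(4,5) col(1) col(2)[OF j] data_value_sets(2)[OF assms(1,2) j]
    by simp
  ultimately show ?thesis
    using nth_largest_strict_antimono data_value_sets(3)[OF assms(1,2) j] assms(2-5)
    by (simp add: word_at)
qed

lemma decreasing_colouring_word:
  assumes "(\<sigma>, A) \<in> data"
  shows "decreasing_colouring (T * K) k (word \<sigma> A) (colour \<sigma>)"
proof (rule decreasing_colouringI)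
  fix p assume "p < T * K"
  then obtain t u where "t < T" "u < K" "p = t * K + u" by (rule block_position)
  then show "colour \<sigma> p < k" using data_colours(3)[OF assms] by (simp add: colour_at)
next
  fix p p' assume pp': "p < p'" "p' < T * K" and same: "colour \<sigma> p = colour \<sigma> p'"
  have "p < T * K" using pp' by simp
  then obtain t u where tu: "t < T" "u < K" "p = t * K + u" by (rule block_position)
  obtain t' u' where tu': "t' < T" "u' < K" "p' = t' * K + u'" using pp'(2) by (rule block_position)
  have j: "\<sigma> t ! u = \<sigma> t' ! u'" using same tu tu' by (simp add: colour_at)
  have "t \<le> t'"
  proof (rule ccontr)
    assume "\<not> t \<le> t'"
    then have "Suc t' * K \<le> t * K" by (intro mult_le_mono1) simp
    then show False using pp'(1) tu(3) tu'(2,3) by simp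
  qed
  then consider "t < t'" | "t = t'" by linarith
  then show "word \<sigma> A p' < word \<sigma> A p"
  proof cases
    case 1
    then show ?thesis using word_less_of_later_block[OF assms] tu tu' j by simp
  next
    case 2
    then have "u < u'" using pp'(1) tu(3) tu'(3) by simp
    then show ?thesis using word_less_within_block[OF assms] tu tu' j 2 by simp
  qed
qed

lemma value_set_eq_image_word:
  assumes "(\<sigma>, A) \<in> data" "t < T" "j < k"
  shows "A t j = word \<sigma> A ` (\<lambda>u. t * K + u) ` {u. u < K \<and> \<sigma> t ! u = j}"
    (is "_ = ?image")
proof
  show "?image \<subseteq> A t j" using word_mem_value_set[OF assms(1,2)] by auto
next
  note col = data_colours[OF assms(1,2)]
  have "nth_largest (A t j) r \<in> ?image" if "r < b" for r
  proof -
    have "r < count (mset (\<sigma> t)) j" using col(2) assms(3) that by simp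
    then obtain u where "u < K" "\<sigma> t ! u = j" "occ_rank (\<sigma> t) u = r"
      using occ_rank_surj col(1) by metis
    moreover from this have "nth_largest (A t j) r = word \<sigma> A (t * K + u)"
      using assms(2) by (simp add: word_at)
    ultimately show ?thesis by blast
  qed
  then have "nth_largest (A t j) ` {..<b} \<subseteq> ?image" by blast
  moreover have "nth_largest (A t j) ` {..<b} = A t j"
    using nth_largest_image[OF data_value_sets(3)[OF assms]] data_value_sets(2)[OF assms] by simp
  ultimately show "A t j \<subseteq> ?image" by simp
qed

lemma colours_determined_by_word:
  assumes D: "(\<sigma>, A) \<in> data" and D': "(\<sigma>', A') \<in> data" and eq: "word \<sigma> A = word \<sigma>' A'"
  shows "\<sigma> = \<sigma>'"
proof
  fix t
  show "\<sigma> t = \<sigma>' t"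
  proof (cases "t < T")
    case t: True
    show ?thesis
    proof (rule nth_equalityI)
      show "length (\<sigma> t) = length (\<sigma>' t)" using data_colours(1)[OF D t] data_colours(1)[OF D' t] by simp
      fix u assume "u < length (\<sigma> t)"
      then have u: "u < K" using data_colours(1)[OF D t] by simp
      show "\<sigma> t ! u = \<sigma>' t ! u"
        using band_unique[OF word_in_band[OF D t u, unfolded eq] word_in_band[OF D' t u]] by simp
    qed
  next
    case False
    moreover have "\<sigma> \<in> {..<T} \<rightarrow>\<^sub>E permutations_of_multiset (balanced_mset k b)"
      "\<sigma>' \<in> {..<T} \<rightarrow>\<^sub>E permutations_of_multiset (balanced_mset k b)"
      using D D' by (simp_all add: data_def)
    ultimately show ?thesis by (metis PiE_arb lessThan_iff)
  qed
qed

lemma inj_on_word: "inj_on (\<lambda>(\<sigma>, A). word \<sigma> A) data"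
proof (rule inj_onI, clarify)
  fix \<sigma> A \<sigma>' A'
  assume D: "(\<sigma>, A) \<in> data" and D': "(\<sigma>', A') \<in> data" and eq: "word \<sigma> A = word \<sigma>' A'"
  have \<sigma>: "\<sigma> = \<sigma>'" using colours_determined_by_word[OF D D' eq] .
  let ?V = "\<Pi>\<^sub>E t\<in>{..<T}. \<Pi>\<^sub>E j\<in>{..<k}. {B. B \<subseteq> band (K - 1) (j + (T - Suc t)) \<and> card B = b}"
  have dom: "A \<in> ?V" "A' \<in> ?V" using D D' by (simp_all add: data_def)
  have "A t j = A' t j" for t j
  proof (cases "t < T \<and> j < k")
    case True
    then show ?thesis
      using value_set_eq_image_word[OF D] value_set_eq_image_word[OF D'] eq \<sigma> by simp
  next
    case False
    then show ?thesis
      using PiE_arb[OF dom(1), of t] PiE_arb[OF dom(2), of t]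
        PiE_arb[OF PiE_mem[OF dom(1)], of t j] PiE_arb[OF PiE_mem[OF dom(2)], of t j]
      by (cases "t < T") simp_all
  qed
  with \<sigma> show "\<sigma> = \<sigma>' \<and> A = A'" by (simp add: fun_eq_iff)
qed

lemma card_data: "card data = block_count k b ^ T"
proof -
  have "card {B. B \<subseteq> band c s \<and> card B = b} = c choose b" for c s
    using n_subsets[of "band c s" b] by (simp add: band_def)
  then show ?thesis
    by (simp add: data_def block_count_def K_def card_cartesian_product card_PiE power_mult
        power_mult_distrib mult.commute[of T])
qed

lemma card_data_le_wbar:
  assumes "(k - 1) * (K - 1) \<le> T"
  shows "card data \<le> wbar (T * K) k"
proof -
  have "word \<sigma> A \<in> avoiders (T * K) k" if "(\<sigma>, A) \<in> data" for \<sigma> A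
    using word_in_words[OF that assms] decreasing_colouring_word[OF that] by (auto simp: mem_avoiders_iff)
  then have "(\<lambda>(\<sigma>, A). word \<sigma> A) ` data \<subseteq> avoiders (T * K) k" by auto
  then show ?thesis
    unfolding wbar_eq_card_avoiders by (intro card_inj_on_le[OF inj_on_word] finite_avoiders)
qed

end

lemma card_permutations_of_balanced_mset_lower_bound:
  assumes "1 \<le> b"
  shows "real k ^ (k * b) \<le> real (card (permutations_of_multiset (balanced_mset k b))) * (exp 1 * real b) ^ k"
proof -
  have "real (k * b) ^ (k * b) * fact b ^ k \<le> fact (k * b) * (exp 1 * real b ^ Suc b) ^ k"
    using multinomial_lower_bound[of "{..<k}" "\<lambda>_. b"] assms by (simp add: mult.commute)
  then have "(real k ^ (k * b) * fact b ^ k) * real b ^ (k * b) \<le> (fact (k * b) * (exp 1 * real b) ^ k) * real b ^ (k * b)"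
    by (simp add: power_mult[symmetric] algebra_simps)
  then have "real k ^ (k * b) * fact b ^ k \<le> fact (k * b) * (exp 1 * real b) ^ k"
    using assms by simp
  then show ?thesis
    using assms by (simp add: card_permutations_of_balanced_mset field_simps)
qed

lemma binomial_pred_lower_bound:
  assumes "2 \<le> k" "1 \<le> b"
  shows "real k ^ (k * b)
           \<le> real ((k * b - 1) choose b) * (exp 1 ^ 2 * real b ^ 2 * real k * real (k - 1) ^ ((k - 1) * b))"
proof -
  define K m where "K = k * b" and "m = (k - 1) * b"
  define Q where "Q = real ((K - 1) choose b)"
  have K: "K = b + m" using assms by (simp add: K_def m_def algebra_simps)
  have "real K ^ K \<le> real (K choose b) * (exp 1 ^ 2 * real b ^ Suc b * real m ^ Suc m)"
    using binomial_lower_bound[OF assms(2), of m] assms by (simp add: K m_def)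
  also have "real m ^ Suc m = real (k - 1) ^ Suc m * real b ^ Suc m"
    by (simp add: m_def power_mult_distrib)
  also have "real (K choose b) * (exp 1 ^ 2 * real b ^ Suc b * (real (k - 1) ^ Suc m * real b ^ Suc m))
      = real (K choose b) * real (k - 1) * (exp 1 ^ 2 * real b ^ 2 * real (k - 1) ^ m) * real b ^ K"
    by (simp add: K power_add power2_eq_square algebra_simps)
  also have "real (K choose b) * real (k - 1) = Q * real k"
  proof -
    have "m * (K choose b) = K * ((K - 1) choose b)"
      using binomial_absorb_comp[of K b] by (simp add: K)
    then have "real m * real (K choose b) = real K * Q"
      unfolding Q_def by (metis of_nat_mult)
    then show ?thesis using assms by (simp add: m_def K_def) (metis mult.commute)
  qed
  finally have "real k ^ K * real b ^ K \<le> Q * (exp 1 ^ 2 * real b ^ 2 * real k * real (k - 1) ^ m) * real b ^ K"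
    by (simp add: K_def algebra_simps)
  then show ?thesis using assms by (simp add: K_def m_def Q_def)
qed

lemma block_count_lower_bound:
  assumes "2 \<le> k" "1 \<le> b"
  shows "growth_rate k ^ (k * b) \<le> real (block_count k b) * (exp 1 ^ 3 * real k * real b ^ 3) ^ k"
proof -
  define K m where "K = k * b" and "m = (k - 1) * b"
  define P Q where "P = real (card (permutations_of_multiset (balanced_mset k b)))"
    and "Q = real ((K - 1) choose b)"
  define E1 E2 R where "E1 = exp 1 * real b" and "E2 = exp 1 ^ 2 * real b ^ 2 * real k"
    and "R = real (k - 1) ^ m"
  have "(real k ^ K) ^ Suc k \<le> (P * E1 ^ k) * (Q * (E2 * R)) ^ k"
    unfolding power_Suc
    using card_permutations_of_balanced_mset_lower_bound[OF assms(2), of k]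
      binomial_pred_lower_bound[OF assms]
    by (intro mult_mono power_mono) (simp_all add: P_def Q_def E1_def E2_def R_def K_def m_def)
  also have "\<dots> = P * Q ^ k * (E1 * E2) ^ k * R ^ k"
    by (simp add: power_mult_distrib mult_ac)
  also have "E1 * E2 = exp 1 ^ 3 * real k * real b ^ 3"
    by (simp add: E1_def E2_def power2_eq_square power3_eq_cube)
  also have "R ^ k = real (k - 1) ^ ((k - 1) * K)"
    by (simp add: R_def m_def K_def power_mult[symmetric] mult_ac)
  finally have "(real k ^ K) ^ Suc k
      \<le> P * Q ^ k * (exp 1 ^ 3 * real k * real b ^ 3) ^ k * real (k - 1) ^ ((k - 1) * K)" .
  moreover have "growth_rate k ^ K = (real k ^ K) ^ Suc k / real (k - 1) ^ ((k - 1) * K)"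
    unfolding growth_rate_def power_divide by (simp only: power_mult[symmetric] mult.commute Suc_eq_plus1)
  moreover have "0 < real (k - 1) ^ ((k - 1) * K)" using assms by simp
  ultimately show ?thesis by (simp add: block_count_def K_def P_def Q_def divide_le_eq)
qed

section \<open>The lower bound\<close>

definition prepend_top :: "nat \<Rightarrow> (nat \<Rightarrow> nat) \<Rightarrow> nat \<Rightarrow> nat" where
  "prepend_top n w = (\<lambda>i\<in>{0..<Suc n}. if i = 0 then Suc n else w (i - 1))"

lemma prepend_top_mem_avoiders:
  assumes "1 \<le> k" "w \<in> avoiders n k"
  shows "prepend_top n w \<in> avoiders (Suc n) k"
proof -
  obtain c where w: "w \<in> words n" and c: "decreasing_colouring n k w c"
    using assms(2) by (auto simp: mem_avoiders_iff)
  have vals: "w i \<in> {1..n}" if "i < n" for i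
    using w that by (auto simp: words_def PiE_iff)
  have "prepend_top n w \<in> words (Suc n)"
  proof -
    have "(if i = 0 then Suc n else w (i - 1)) \<in> {1..Suc n}" if "i < Suc n" for i
      using that by (cases i) (auto dest!: vals)
    then show ?thesis by (simp add: words_def prepend_top_def restrict_PiE_iff)
  qed
  moreover have "decreasing_colouring (Suc n) k (prepend_top n w) (\<lambda>i. if i = 0 then 0 else c (i - 1))"
  proof (rule decreasing_colouringI)
    fix i assume "i < Suc n"
    then show "(if i = 0 then 0 else c (i - 1)) < k"
      using c assms(1) by (auto simp: decreasing_colouring_def)
  next
    fix i i' assume "i < i'" "i' < Suc n"
      "(if i = 0 then 0 else c (i - 1)) = (if i' = 0 then 0 else c (i' - 1))"
    moreover have "w (i' - 1) \<le> n" using vals[of "i' - 1"] \<open>i < i'\<close> \<open>i' < Suc n\<close> by simp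
    ultimately show "prepend_top n w i' < prepend_top n w i"
      using decreasing_colouringD[OF c, of "i - 1" "i' - 1"] by (auto simp: prepend_top_def)
  qed
  ultimately show ?thesis by (auto simp: mem_avoiders_iff)
qed

lemma inj_on_prepend_top: "inj_on (prepend_top n) (words n)"
proof (rule inj_onI, rule ext)
  fix w w' i assume w: "w \<in> words n" and w': "w' \<in> words n" and eq: "prepend_top n w = prepend_top n w'"
  show "w i = w' i"
  proof (cases "i < n")
    case True
    then show ?thesis using fun_cong[OF eq, of "Suc i"] by (simp add: prepend_top_def)
  next
    case False
    with w w' show ?thesis by (metis PiE_arb atLeastLessThan_iff words_def)
  qed
qed

lemma wbar_mono:
  assumes "1 \<le> k" "m \<le> n"
  shows "wbar m k \<le> wbar n k"
proof -
  have "wbar n k \<le> wbar (Suc n) k" for n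
  proof -
    have "prepend_top n ` avoiders n k \<subseteq> avoiders (Suc n) k"
      using prepend_top_mem_avoiders[OF assms(1)] by blast
    moreover have "inj_on (prepend_top n) (avoiders n k)"
      using inj_on_prepend_top by (rule inj_on_subset) (simp add: avoiders_def)
    ultimately show ?thesis
      unfolding wbar_eq_card_avoiders by (intro card_inj_on_le finite_avoiders)
  qed
  then show ?thesis using lift_Suc_mono_le[of "\<lambda>n. wbar n k"] assms(2) by blast
qed

lemma wbar_zero: "wbar 0 k = 1"
proof -
  have "avoiders 0 k = {\<lambda>_. undefined}"
    by (auto simp: avoiders_def words_def has_weakly_inc_subseq_def)
  then show ?thesis by (simp add: wbar_eq_card_avoiders)
qed

lemma one_le_wbar: "1 \<le> k \<Longrightarrow> 1 \<le> wbar n k"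
  using wbar_mono[of k 0 n] by (simp add: wbar_zero)

lemma one_less_growth_rate:
  assumes "2 \<le> k"
  shows "1 < growth_rate k"
proof -
  have "real (k - 1) ^ (k - 1) \<le> real k ^ (k - 1)" by (intro power_mono) auto
  also have "\<dots> < real k ^ (k + 1)" using assms by (intro power_strict_increasing) auto
  finally show ?thesis using assms by (simp add: growth_rate_def)
qed

lemma root_tendsto_of_exponential_bounds:
  fixes f :: "nat \<Rightarrow> real"
  assumes nonneg: "\<And>n. 0 \<le> f n" and upper: "\<And>n. f n \<le> L ^ n"
    and lower: "\<And>\<rho>. 0 < \<rho> \<Longrightarrow> \<rho> < L \<Longrightarrow> \<exists>c>0. \<forall>\<^sub>F n in sequentially. c * \<rho> ^ n \<le> f n"
  shows "(\<lambda>n. root n (f n)) \<longlonglongrightarrow> L"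
proof (rule order_tendstoI)
  have L: "0 \<le> L" using nonneg[of 1] upper[of 1] by simp
  fix a assume "L < a"
  have "root n (f n) < a" if "1 \<le> n" for n
  proof -
    have "root n (f n) \<le> root n (L ^ n)" using that upper by (intro real_root_le_mono) auto
    also have "\<dots> = L" using that L by (simp add: real_root_power_cancel)
    finally show ?thesis using \<open>L < a\<close> by simp
  qed
  then show "\<forall>\<^sub>F n in sequentially. root n (f n) < a" by (rule eventually_sequentiallyI)
next
  fix a assume "a < L"
  show "\<forall>\<^sub>F n in sequentially. a < root n (f n)"
  proof (cases "a < 0")
    case True
    have "a < root n (f n)" for n using True real_root_ge_zero[OF nonneg[of n], of n] by linarith
    then show ?thesis by simp
  next
    case False
    define \<rho> where "\<rho> = (a + L) / 2"
    have \<rho>: "0 < \<rho>" "a < \<rho>" "\<rho> < L" using False \<open>a < L\<close> by (auto simp: \<rho>_def)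
    obtain c where c: "0 < c" "\<forall>\<^sub>F n in sequentially. c * \<rho> ^ n \<le> f n" using lower[OF \<rho>(1,3)] by blast
    have "(\<lambda>n. root n c * \<rho>) \<longlonglongrightarrow> 1 * \<rho>" by (intro tendsto_intros LIMSEQ_root_const c(1))
    then have "\<forall>\<^sub>F n in sequentially. a < root n c * \<rho>" using \<rho>(2) by (simp add: order_tendstoD(1))
    with c(2) eventually_gt_at_top[of 0] show ?thesis
    proof eventually_elim
      case (elim n)
      have "root n c * \<rho> = root n (c * \<rho> ^ n)"
        using elim(2) \<rho>(1) by (simp add: real_root_mult real_root_power_cancel)
      also have "\<dots> \<le> root n (f n)" using elim(1,2) by (intro real_root_le_mono) auto
      finally show ?case using elim(3) by simp
    qed
  qed
qed

lemma wbar_ge_block_count_power: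
  assumes "2 \<le> k" "1 \<le> b" "(k - 1) * (k * b - 1) \<le> T" "T * (k * b) \<le> n"
  shows "block_count k b ^ T \<le> wbar n k"
proof -
  interpret block_construction k b T using assms(1,2) by unfold_locales
  have "block_count k b ^ T = card data" by (simp add: card_data)
  also have "\<dots> \<le> wbar (T * (k * b)) k" using card_data_le_wbar assms(3) by (simp add: K_def)
  also have "\<dots> \<le> wbar n k" using wbar_mono assms(1,4) by simp
  finally show ?thesis .
qed

lemma block_count_exceeds_power:
  assumes k: "2 \<le> k" and \<rho>: "0 \<le> \<rho>" "\<rho> < growth_rate k"
  shows "\<exists>b\<ge>1. \<rho> ^ (k * b) \<le> real (block_count k b)"
proof -
  define D where "D b = exp 1 ^ 3 * real k * real b ^ 3" for b :: nat
  have "(\<lambda>b. root b (exp 1 ^ 3 * real k) * root b (real b) ^ 3) \<longlonglongrightarrow> 1 * 1 ^ 3"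
    using k by (intro tendsto_intros LIMSEQ_root LIMSEQ_root_const) auto
  moreover have "\<forall>\<^sub>F b in sequentially. root b (exp 1 ^ 3 * real k) * root b (real b) ^ 3 = root b (D b)"
    by (intro eventually_sequentiallyI[of 1]) (simp add: D_def real_root_mult real_root_power)
  ultimately have "(\<lambda>b. root b (D b)) \<longlonglongrightarrow> 1"
    using tendsto_cong by force
  then have "(\<lambda>b. growth_rate k / root b (D b)) \<longlonglongrightarrow> growth_rate k / 1"
    by (intro tendsto_intros) auto
  then have "\<forall>\<^sub>F b in sequentially. \<rho> < growth_rate k / root b (D b)"
    using \<rho>(2) by (simp add: order_tendstoD(1))
  then obtain N where "\<forall>b\<ge>N. \<rho> < growth_rate k / root b (D b)"
    unfolding eventually_sequentially by blast
  then obtain b where b: "1 \<le> b" "\<rho> < growth_rate k / root b (D b)"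
    by (metis le_add1 le_add2)
  define x where "x = growth_rate k / root b (D b)"
  have D: "0 < D b" using k b by (simp add: D_def)
  have "x ^ b = growth_rate k ^ b / D b" using b D by (simp add: x_def power_divide)
  then have "x ^ (k * b) = growth_rate k ^ (k * b) / D b ^ k"
    by (simp add: mult.commute[of k] power_mult power_divide)
  also have "\<dots> \<le> real (block_count k b)"
    using block_count_lower_bound[OF k b(1)] D by (simp add: D_def divide_le_eq)
  finally have "x ^ (k * b) \<le> real (block_count k b)" .
  moreover have "\<rho> ^ (k * b) \<le> x ^ (k * b)" using \<rho>(1) b(2) by (intro power_mono) (simp_all add: x_def)
  ultimately show ?thesis using b(1) by (meson order_trans)
qed

lemma power_le_wbar_mult_power:
  assumes k: "2 \<le> k" and b: "1 \<le> b" and r: "1 \<le> r" "r ^ (k * b) \<le> real (block_count k b)"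
    and n: "((k - 1) * (k * b - 1) + 1) * (k * b) \<le> n"
  shows "r ^ n \<le> real (wbar n k) * r ^ (k * b)"
proof -
  define K T where "K = k * b" and "T = n div K"
  have K: "0 < K" using k b by (simp add: K_def)
  have T: "(k - 1) * (K - 1) \<le> T" using div_le_mono[OF n, of "k * b"] K by (simp add: T_def K_def)
  have "T * K + n mod K = n" unfolding T_def by (rule div_mult_mod_eq)
  then have n: "T * K \<le> n" "n \<le> T * K + K" using mod_less_divisor[OF K, of n] by linarith+
  have "(r ^ K) ^ T \<le> real (block_count k b) ^ T"
    using r by (intro power_mono) (simp_all add: K_def)
  also have "\<dots> \<le> real (wbar n k)"
    using wbar_ge_block_count_power[OF k b] T n(1) by (simp add: K_def flip: of_nat_power)
  finally have "(r ^ K) ^ T * r ^ K \<le> real (wbar n k) * r ^ K"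
    using r(1) by (intro mult_right_mono) simp_all
  moreover have "r ^ n \<le> (r ^ K) ^ T * r ^ K"
    using power_increasing[OF n(2) r(1)] by (simp add: power_add power_mult mult.commute)
  ultimately show ?thesis by (simp add: K_def)
qed

lemma wbar_exponential_lower_bound:
  assumes "1 \<le> k" "0 < \<rho>" "\<rho> < growth_rate k"
  shows "\<exists>c>0. \<forall>\<^sub>F n in sequentially. c * \<rho> ^ n \<le> real (wbar n k)"
proof (cases "k = 1")
  case True
  then have "\<rho> ^ n \<le> real (wbar n k)" for n
    using assms one_le_wbar[of k n] power_le_one[of \<rho> n] by (simp add: growth_rate_def)
  then show ?thesis by (intro exI[of _ 1]) simp
next
  case False
  with assms(1) have k: "2 \<le> k" by simp
  define r where "r = max \<rho> 1"
  have r: "1 \<le> r" "r < growth_rate k" using assms(3) one_less_growth_rate[OF k] by (auto simp: r_def)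
  obtain b where b: "1 \<le> b" "r ^ (k * b) \<le> real (block_count k b)"
    using block_count_exceeds_power[OF k _ r(2)] r(1) by auto
  have "\<rho> ^ n / r ^ (k * b) \<le> real (wbar n k)" if "((k - 1) * (k * b - 1) + 1) * (k * b) \<le> n" for n
  proof -
    have "\<rho> ^ n \<le> r ^ n" using assms(2) by (intro power_mono) (simp_all add: r_def)
    also have "\<dots> \<le> real (wbar n k) * r ^ (k * b)" by (rule power_le_wbar_mult_power[OF k b(1) r(1) b(2) that])
    finally show ?thesis using r(1) by (simp add: divide_le_eq)
  qed
  then show ?thesis
    using r(1) by (intro exI[of _ "1 / r ^ (k * b)"]) (auto simp: eventually_sequentially)
qed

theorem theorem3p9:
  fixes k :: nat
  assumes "k \<ge> 1"
  shows "convergent (\<lambda>n. root n (real (wbar n k)))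
    \<and> limsup (\<lambda>n. ereal (root n (real (wbar n k))))
        = ereal (real k ^ (k + 1) / real (k - 1) ^ (k - 1))"
proof -
  have lim: "(\<lambda>n. root n (real (wbar n k))) \<longlonglongrightarrow> growth_rate k"
    by (rule root_tendsto_of_exponential_bounds)
      (use wbar_le_growth_rate_power wbar_exponential_lower_bound assms in auto)
  then have "convergent (\<lambda>n. root n (real (wbar n k)))" by (rule convergentI)
  moreover have "limsup (\<lambda>n. ereal (root n (real (wbar n k)))) = ereal (growth_rate k)"
    using lim by (intro lim_imp_Limsup tendsto_ereal) simp_all
  ultimately show ?thesis by (simp add: growth_rate_def)
qed

end
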